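(* Let $A$ be a real symmetric $n\times n$ matrix such that the graph $\mathcal{G}(A)$ is connected and all nonzero off-diagonal entries of $A$ have the same sign. Let $S\subseteq\{1,\dots,n\}$ and $Z=\{{\bf e}_j: j\in S\}$. Then $\operatorname{rank}\widetilde W(A,Z)=n$ if and only if $\mathcal{L}(A,Z)=gl(n,\mathbb{R})$.
   Context: ${\bf e}_j$ is the $j$th standard basis vector of $\mathbb{R}^n$. For a real symmetric $A=[a_{kj}]$, $\mathcal{G}(A)$ is the simple graph on $\{1,\dots,n\}$ with edges $\{kj: a_{kj}\neq0,\ k\neq j\}$. For $Z=\{{\bf z}_1,\dots,{\bf z}_s\}\subset\mathbb{R}^n$, $\widetilde W(A,Z):=[{\bf z}_1, A{\bf z}_1,\dots,A^{n-1}{\bf z}_1,\dots,{\bf z}_s,A{\bf z}_s,\dots,A^{n-1}{\bf z}_s]$ (an $n\times(ns)$ matrix), and $\mathcal{L}(A,Z)$ is the real Lie algebra generated by $A,{\bf z}_1{\bf z}_1^T,\dots,{\bf z}_s{\bf z}_s^T$ (smallest real vector space containing them closed under $[X,Y]=XY-YX$). $gl(n,\mathbb{R})$ is the Lie algebra of all real $n\times n$ matrices. *)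

theory Defs
  imports "HOL-Analysis.Analysis"
begin

(* matrix powers w.r.t. matrix product ** (note: * on vectors is componentwise) *)
primrec matpow :: "real^'n^'n \<Rightarrow> nat \<Rightarrow> real^'n^'n" where
  "matpow A 0 = mat 1"
| "matpow A (Suc k) = A ** matpow A k"

definition graph_adj :: "real^'n^'n \<Rightarrow> 'n \<Rightarrow> 'n \<Rightarrow> bool" where
  "graph_adj A k j \<longleftrightarrow> k \<noteq> j \<and> A $ k $ j \<noteq> 0"

definition graph_connected :: "real^'n^'n \<Rightarrow> bool" where
  "graph_connected A \<longleftrightarrow> (\<forall>i j. (graph_adj A)\<^sup>*\<^sup>* i j)"

(* column vectors of the matrix W~(A,Z), Z = {e_j : j \<in> S};
   its rank is the dimension of the span of its columns *)
definition W_cols :: "real^'n^'n \<Rightarrow> 'n set \<Rightarrow> (real^'n) set" where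
  "W_cols A S = {matpow A k *v axis j 1 | j k. j \<in> S \<and> k < CARD('n)}"

definition W_rank :: "real^'n^'n \<Rightarrow> 'n set \<Rightarrow> nat" where
  "W_rank A S = dim (span (W_cols A S))"

definition outer :: "real^'n \<Rightarrow> real^'n^'n" where
  "outer z = (\<chi> i j. z $ i * z $ j)"

definition lie_bracket :: "real^'n^'n \<Rightarrow> real^'n^'n \<Rightarrow> real^'n^'n" where
  "lie_bracket X Y = X ** Y - Y ** X"

inductive_set lie_gen :: "(real^'n^'n) set \<Rightarrow> (real^'n^'n) set" for G where
  base: "X \<in> G \<Longrightarrow> X \<in> lie_gen G"
| zero: "0 \<in> lie_gen G"
| add: "X \<in> lie_gen G \<Longrightarrow> Y \<in> lie_gen G \<Longrightarrow> X + Y \<in> lie_gen G"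
| scale: "X \<in> lie_gen G \<Longrightarrow> (c::real) *\<^sub>R X \<in> lie_gen G"
| bracket: "X \<in> lie_gen G \<Longrightarrow> Y \<in> lie_gen G \<Longrightarrow> lie_bracket X Y \<in> lie_gen G"

definition lie_AZ :: "real^'n^'n \<Rightarrow> 'n set \<Rightarrow> (real^'n^'n) set" where
  "lie_AZ A S = lie_gen (insert A {outer (axis j 1) | j. j \<in> S})"

end

theory Submission
  imports Defs
begin

text \<open>If the Krylov vectors \<open>A\<^sup>k e\<^sub>j\<close> (\<open>j \<in> S\<close>) span \<open>\<real>\<^sup>n\<close>, take a maximal subspace \<open>V\<close>
  containing some \<open>e\<^sub>j\<close> such that \<open>x y\<^sup>T \<in> \<L>(A,Z)\<close> for all \<open>x, y \<in> V\<close>. Bracketing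
  \<open>x x\<^sup>T\<close> with the symmetric \<open>A\<close> shows that \<open>V\<close> is \<open>A\<close>-invariant. As \<open>\<G>(A)\<close> is connected
  and the off-diagonal entries of \<open>A\<close> have one sign, an \<open>A\<close>-invariant subspace containing
  \<open>e\<^sub>j\<close> has, for every \<open>k\<close>, a vector with positive \<open>k\<close>-th entry; bracketing with \<open>e\<^sub>k e\<^sub>k\<^sup>T\<close>
  then puts \<open>e\<^sub>k\<close> into \<open>V\<close> for all \<open>k \<in> S\<close>. So \<open>V\<close> contains all Krylov vectors, \<open>V = \<real>\<^sup>n\<close>,
  and \<open>\<L>(A,Z)\<close> contains every rank-one matrix.
  Conversely, the Krylov span is invariant under \<open>A\<close> and all \<open>e\<^sub>j e\<^sub>j\<^sup>T\<close>, hence under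
  \<open>\<L>(A,Z)\<close>; if that is all of \<open>gl(n,\<real>)\<close>, then \<open>w = (w e\<^sub>j\<^sup>T) e\<^sub>j\<close> lies in it for every \<open>w\<close>.\<close>

definition outer_prod :: "real^'n \<Rightarrow> real^'n \<Rightarrow> real^'n^'n" where
  "outer_prod x y = (\<chi> i j. x $ i * y $ j)"

lemma outer_eq_outer_prod: "outer z = outer_prod z z"
  by (simp add: outer_def outer_prod_def)

lemma outer_prod_add_left: "outer_prod (x + y) z = outer_prod x z + outer_prod y z"
  and outer_prod_add_right: "outer_prod z (x + y) = outer_prod z x + outer_prod z y"
  and outer_prod_scaleR_left: "outer_prod (c *\<^sub>R x) z = c *\<^sub>R outer_prod x z"
  and outer_prod_scaleR_right: "outer_prod z (c *\<^sub>R x) = c *\<^sub>R outer_prod z x"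
  and outer_prod_zero_left [simp]: "outer_prod 0 z = 0"
  and outer_prod_zero_right [simp]: "outer_prod z 0 = 0"
  by (simp_all add: outer_prod_def vec_eq_iff algebra_simps)

lemma matrix_mult_outer_prod: "outer_prod a b ** outer_prod c d = (b \<bullet> c) *\<^sub>R outer_prod a d"
  by (simp add: outer_prod_def matrix_matrix_mult_def vec_eq_iff inner_vec_def
      sum_distrib_left mult_ac)

lemma matrix_vector_mult_outer_prod: "outer_prod a b *v v = (b \<bullet> v) *\<^sub>R a"
  by (simp add: outer_prod_def matrix_vector_mult_def vec_eq_iff inner_vec_def
      sum_distrib_left mult_ac)

lemma lie_bracket_outer_prod:
  "lie_bracket (outer_prod a b) (outer_prod c d) = (b \<bullet> c) *\<^sub>R outer_prod a d - (d \<bullet> a) *\<^sub>R outer_prod c b"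
  by (simp add: lie_bracket_def matrix_mult_outer_prod)

lemma lie_bracket_outer_prod_symmetric:
  assumes "transpose A = A"
  shows "lie_bracket (outer_prod a b) A = outer_prod a (A *v b) - outer_prod (A *v a) b"
proof -
  have "A $ i $ j = A $ j $ i" for i j
    by (metis assms transpose_def vec_lambda_beta)
  then show ?thesis
    by (simp add: lie_bracket_def outer_prod_def matrix_matrix_mult_def matrix_vector_mult_def
        vec_eq_iff sum_distrib_left sum_distrib_right mult_ac)
qed

lemma lie_bracket_diff_right: "lie_bracket X (Y - Z) = lie_bracket X Y - lie_bracket X Z"
  by (simp add: lie_bracket_def matrix_matrix_mult_def vec_eq_iff sum_subtractf algebra_simps)

lemma sum_outer_prod_axis_row: "(\<Sum>i\<in>UNIV. outer_prod (axis i 1) (row i M)) = M"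
  by (simp add: vec_eq_iff outer_prod_def row_def axis_def sum_component of_bool_def[symmetric] sum.delta)

lemma subspace_lie_gen: "subspace (lie_gen G)"
  unfolding subspace_def by (auto intro: lie_gen.intros)

lemma lie_gen_diff: "X \<in> lie_gen G \<Longrightarrow> Y \<in> lie_gen G \<Longrightarrow> X - Y \<in> lie_gen G"
  using subspace_lie_gen subspace_diff by blast

lemma lie_gen_lincomb: "X \<in> lie_gen G \<Longrightarrow> Y \<in> lie_gen G \<Longrightarrow> a *\<^sub>R X + b *\<^sub>R Y \<in> lie_gen G"
  by (intro lie_gen.add lie_gen.scale)

lemma lie_gen_eq_UNIV_if_outer_prod:
  assumes "\<And>x y. outer_prod x y \<in> lie_gen G"
  shows "lie_gen G = UNIV"
proof -
  have "(\<Sum>i\<in>UNIV. outer_prod (axis i 1) (row i M)) \<in> lie_gen G" for M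
    using assms subspace_lie_gen by (intro subspace_sum) auto
  then show ?thesis
    by (auto simp: sum_outer_prod_axis_row)
qed

lemma lie_gen_invariant_subspace:
  assumes "subspace T" and "\<And>Y v. Y \<in> G \<Longrightarrow> v \<in> T \<Longrightarrow> Y *v v \<in> T"
    and "X \<in> lie_gen G" and "v \<in> T"
  shows "X *v v \<in> T"
  using assms(3,4)
proof (induction arbitrary: v rule: lie_gen.induct)
  case (base X)
  then show ?case using assms(2) by blast
next
  case zero
  then show ?case using assms(1) by (simp add: subspace_0)
next
  case (add X Y)
  then show ?case using assms(1) by (simp add: matrix_vector_mult_add_rdistrib subspace_add)
next
  case (scale X c)
  then show ?case using assms(1) by (simp add: scaleR_matrix_vector_assoc[symmetric] subspace_scale)
next
  case (bracket X Y)
  then show ?case using assms(1)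
    by (simp add: lie_bracket_def matrix_vector_mult_diff_rdistrib
        matrix_vector_mul_assoc[symmetric] subspace_diff)
qed

text \<open>In a Lie algebra containing \<open>x x\<^sup>T\<close> with \<open>x \<noteq> 0\<close>, the skew part
  \<open>x y\<^sup>T - y x\<^sup>T\<close> already yields both \<open>x y\<^sup>T\<close> and \<open>y x\<^sup>T\<close>: bracketing it with \<open>x x\<^sup>T\<close>
  produces the symmetric part up to a multiple of \<open>x x\<^sup>T\<close>.\<close>

lemma lie_gen_outer_prod_of_skew:
  assumes xx: "outer_prod x x \<in> lie_gen G" and "x \<noteq> 0"
    and skew: "outer_prod x y - outer_prod y x \<in> lie_gen G"
  shows "outer_prod x y \<in> lie_gen G" and "outer_prod y x \<in> lie_gen G"
proof -
  let ?L = "lie_gen G" and ?sym = "outer_prod x y + outer_prod y x"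
  have xx0: "x \<bullet> x \<noteq> 0" using \<open>x \<noteq> 0\<close> by simp
  have "lie_bracket (outer_prod x x) (outer_prod x y - outer_prod y x)
      = (x \<bullet> x) *\<^sub>R ?sym - (2 * (x \<bullet> y)) *\<^sub>R outer_prod x x"
    by (simp add: lie_bracket_diff_right lie_bracket_outer_prod algebra_simps inner_commute
        scaleR_2[symmetric] del: scaleR_2)
  moreover have "lie_bracket (outer_prod x x) (outer_prod x y - outer_prod y x) \<in> ?L"
    using xx skew by (rule lie_gen.bracket)
  ultimately have "(1 / (x \<bullet> x)) *\<^sub>R ((x \<bullet> x) *\<^sub>R ?sym - (2 * (x \<bullet> y)) *\<^sub>R outer_prod x x)
      + (2 * (x \<bullet> y) / (x \<bullet> x)) *\<^sub>R outer_prod x x \<in> ?L"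
    using xx lie_gen_lincomb by metis
  then have sym: "?sym \<in> ?L"
    using xx0 by (simp add: algebra_simps)
  have "outer_prod x y = (1/2) *\<^sub>R (?sym + (outer_prod x y - outer_prod y x))"
    and "outer_prod y x = (1/2) *\<^sub>R (?sym - (outer_prod x y - outer_prod y x))"
    by (simp_all add: vec_eq_iff outer_prod_def)
  then show "outer_prod x y \<in> ?L" and "outer_prod y x \<in> ?L"
    using sym skew by (metis lie_gen.add lie_gen.scale lie_gen_diff)+
qed

lemma lie_gen_outer_prod_nonorthogonal:
  assumes xx: "outer_prod x x \<in> lie_gen G" and yy: "outer_prod y y \<in> lie_gen G"
    and "x \<bullet> y \<noteq> 0"
  shows "outer_prod x y \<in> lie_gen G" and "outer_prod y x \<in> lie_gen G"
proof -
  have "lie_bracket (outer_prod x x) (outer_prod y y) = (x \<bullet> y) *\<^sub>R (outer_prod x y - outer_prod y x)"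
    by (simp add: lie_bracket_outer_prod inner_commute algebra_simps)
  moreover have "lie_bracket (outer_prod x x) (outer_prod y y) \<in> lie_gen G"
    using xx yy by (rule lie_gen.bracket)
  ultimately have "(1 / (x \<bullet> y)) *\<^sub>R ((x \<bullet> y) *\<^sub>R (outer_prod x y - outer_prod y x)) \<in> lie_gen G"
    by (metis lie_gen.scale)
  then have "outer_prod x y - outer_prod y x \<in> lie_gen G"
    using \<open>x \<bullet> y \<noteq> 0\<close> by simp
  moreover have "x \<noteq> 0" using \<open>x \<bullet> y \<noteq> 0\<close> by auto
  ultimately show "outer_prod x y \<in> lie_gen G" and "outer_prod y x \<in> lie_gen G"
    using lie_gen_outer_prod_of_skew xx by blast+
qed

lemma lie_gen_outer_prod_trans:
  assumes "outer_prod a x \<in> lie_gen G" "outer_prod x b \<in> lie_gen G"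
    and "outer_prod x x \<in> lie_gen G" "x \<noteq> 0"
  shows "outer_prod a b \<in> lie_gen G"
proof -
  have "lie_bracket (outer_prod a x) (outer_prod x b) \<in> lie_gen G"
    using assms(1,2) by (rule lie_gen.bracket)
  then have "(1 / (x \<bullet> x)) *\<^sub>R lie_bracket (outer_prod a x) (outer_prod x b)
      + (b \<bullet> a / (x \<bullet> x)) *\<^sub>R outer_prod x x \<in> lie_gen G"
    using assms(3) lie_gen_lincomb by blast
  then show ?thesis
    using \<open>x \<noteq> 0\<close> by (simp add: lie_bracket_outer_prod algebra_simps)
qed

lemma lie_gen_outer_prod_symmetric_image:
  assumes "A \<in> lie_gen G" "transpose A = A" and xx: "outer_prod x x \<in> lie_gen G" "x \<noteq> 0"
    and "outer_prod x p \<in> lie_gen G" "outer_prod p x \<in> lie_gen G" and "A *v x = p + q"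
  shows "outer_prod x q \<in> lie_gen G" and "outer_prod q x \<in> lie_gen G"
proof -
  have "lie_bracket (outer_prod x x) A \<in> lie_gen G"
    using xx(1) assms(1) by (rule lie_gen.bracket)
  moreover have "lie_bracket (outer_prod x x) A
      = (outer_prod x q - outer_prod q x) + (outer_prod x p - outer_prod p x)"
    using assms(2,7) by (simp add: lie_bracket_outer_prod_symmetric outer_prod_add_left
        outer_prod_add_right)
  ultimately have "outer_prod x q - outer_prod q x \<in> lie_gen G"
    using assms(5,6) by (metis add_diff_cancel lie_gen_diff)
  then show "outer_prod x q \<in> lie_gen G" and "outer_prod q x \<in> lie_gen G"
    using lie_gen_outer_prod_of_skew xx by blast+
qed

definition rank_one_closed :: "(real^'n^'n) set \<Rightarrow> (real^'n) set \<Rightarrow> bool" where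
  "rank_one_closed G V \<longleftrightarrow> subspace V \<and> (\<forall>x\<in>V. \<forall>y\<in>V. outer_prod x y \<in> lie_gen G)"

definition maximal_rank_one_closed :: "(real^'n^'n) set \<Rightarrow> (real^'n) set \<Rightarrow> bool" where
  "maximal_rank_one_closed G V \<longleftrightarrow>
     rank_one_closed G V \<and> (\<forall>W. rank_one_closed G W \<longrightarrow> V \<subseteq> W \<longrightarrow> W = V)"

lemma outer_prod_span_in_lie_gen:
  assumes "\<And>a b. a \<in> B \<Longrightarrow> b \<in> B \<Longrightarrow> outer_prod a b \<in> lie_gen G"
    and "x \<in> span B" "y \<in> span B"
  shows "outer_prod x y \<in> lie_gen G"
proof -
  have subspace_left: "subspace {x. outer_prod x b \<in> lie_gen G}" for b
    unfolding subspace_def by (auto simp: outer_prod_add_left outer_prod_scaleR_left intro: lie_gen.intros)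
  have subspace_right: "subspace {y. outer_prod a y \<in> lie_gen G}" for a
    unfolding subspace_def by (auto simp: outer_prod_add_right outer_prod_scaleR_right intro: lie_gen.intros)
  have "span B \<subseteq> {x. outer_prod x b \<in> lie_gen G}" if "b \<in> B" for b
    using assms(1) that by (intro span_minimal subspace_left) auto
  then have "span B \<subseteq> {y. outer_prod x y \<in> lie_gen G}"
    using assms(2) by (intro span_minimal subspace_right) auto
  then show ?thesis
    using assms(3) by auto
qed

lemma rank_one_closed_span_insert:
  assumes "rank_one_closed G V" "outer_prod z z \<in> lie_gen G"
    and "\<And>v. v \<in> V \<Longrightarrow> outer_prod v z \<in> lie_gen G \<and> outer_prod z v \<in> lie_gen G"
  shows "rank_one_closed G (span (insert z V))"
proof -
  have "outer_prod a b \<in> lie_gen G" if "a \<in> insert z V" "b \<in> insert z V" for a b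
    using assms that unfolding rank_one_closed_def by blast
  then show ?thesis
    unfolding rank_one_closed_def using outer_prod_span_in_lie_gen by blast
qed

lemma ex_maximal_rank_one_closed:
  fixes G :: "(real^'n^'n) set"
  assumes "rank_one_closed G V\<^sub>0"
  shows "\<exists>V. V\<^sub>0 \<subseteq> V \<and> maximal_rank_one_closed G V"
proof -
  define D where "D = {dim V | V :: (real^'n) set. V\<^sub>0 \<subseteq> V \<and> rank_one_closed G V}"
  have "D \<subseteq> {..CARD('n)}"
    unfolding D_def using dim_subset_UNIV_cart by fastforce
  then have "finite D"
    by (rule finite_subset) simp
  moreover have "D \<noteq> {}"
    using assms unfolding D_def by blast
  ultimately have "Max D \<in> D" by simp
  then obtain V where V: "V\<^sub>0 \<subseteq> V" "rank_one_closed G V" "dim V = Max D"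
    unfolding D_def by auto
  have "W = V" if "rank_one_closed G W" "V \<subseteq> W" for W
  proof -
    have "dim W \<in> D"
      using that V(1) unfolding D_def by blast
    then have "dim W \<le> dim V"
      using V(3) \<open>finite D\<close> by simp
    then show "W = V"
      using subspace_dim_equal[of V W] that V(2) unfolding rank_one_closed_def by auto
  qed
  then show ?thesis
    using V unfolding maximal_rank_one_closed_def by blast
qed

lemma maximal_rank_one_closed_absorb:
  assumes "maximal_rank_one_closed G V" "outer_prod z z \<in> lie_gen G"
    and "\<And>v. v \<in> V \<Longrightarrow> outer_prod v z \<in> lie_gen G \<and> outer_prod z v \<in> lie_gen G"
  shows "z \<in> V"
proof -
  have "rank_one_closed G (span (insert z V))"
    using assms(1) rank_one_closed_span_insert[OF _ assms(2,3)]
    unfolding maximal_rank_one_closed_def by blast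
  moreover have "V \<subseteq> span (insert z V)"
    by (meson span_superset subset_insertI subset_trans)
  ultimately have "span (insert z V) = V"
    using assms(1) unfolding maximal_rank_one_closed_def by blast
  then show "z \<in> V"
    by (metis insertI1 span_superset subsetD)
qed

lemma maximal_rank_one_closed_absorb_nonorthogonal:
  assumes max: "maximal_rank_one_closed G V" and ee: "outer_prod e e \<in> lie_gen G"
    and "v \<in> V" "v \<bullet> e \<noteq> 0"
  shows "e \<in> V"
proof (rule maximal_rank_one_closed_absorb[OF max ee])
  have in_V: "\<And>x y. x \<in> V \<Longrightarrow> y \<in> V \<Longrightarrow> outer_prod x y \<in> lie_gen G"
    using max unfolding maximal_rank_one_closed_def rank_one_closed_def by blast
  have vv: "outer_prod v v \<in> lie_gen G" and "v \<noteq> 0"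
    using in_V \<open>v \<in> V\<close> \<open>v \<bullet> e \<noteq> 0\<close> by auto
  have "outer_prod v e \<in> lie_gen G" "outer_prod e v \<in> lie_gen G"
    using lie_gen_outer_prod_nonorthogonal[OF vv ee \<open>v \<bullet> e \<noteq> 0\<close>] by auto
  moreover have "outer_prod w v \<in> lie_gen G" "outer_prod v w \<in> lie_gen G" if "w \<in> V" for w
    using in_V that \<open>v \<in> V\<close> by blast+
  ultimately show "outer_prod w e \<in> lie_gen G \<and> outer_prod e w \<in> lie_gen G" if "w \<in> V" for w
    using lie_gen_outer_prod_trans[OF _ _ vv \<open>v \<noteq> 0\<close>] that by blast
qed

text \<open>If \<open>A x = y + z\<close> with \<open>y \<in> V\<close> and \<open>z \<perp> V\<close>, then bracketing \<open>x x\<^sup>T\<close> with \<open>A\<close>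
  puts \<open>x z\<^sup>T\<close> and \<open>z x\<^sup>T\<close> into the Lie algebra, so maximality forces \<open>z \<in> V\<close>, i.e.\ \<open>z = 0\<close>.\<close>

lemma maximal_rank_one_closed_invariant:
  assumes max: "maximal_rank_one_closed G V" and "A \<in> lie_gen G" "transpose A = A" and "x \<in> V"
  shows "A *v x \<in> V"
proof (cases "x = 0")
  case True
  then show ?thesis
    using max by (simp add: maximal_rank_one_closed_def rank_one_closed_def subspace_0)
next
  case False
  have "subspace V" and in_V: "\<And>x y. x \<in> V \<Longrightarrow> y \<in> V \<Longrightarrow> outer_prod x y \<in> lie_gen G"
    using max unfolding maximal_rank_one_closed_def rank_one_closed_def by blast+
  obtain y z where "y \<in> V" and z_orth: "\<And>w. w \<in> V \<Longrightarrow> orthogonal z w" and decomp: "A *v x = y + z"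
    using orthogonal_subspace_decomp_exists[of V "A *v x"] \<open>subspace V\<close> by (metis span_eq_iff)
  have xx: "outer_prod x x \<in> lie_gen G"
    using in_V \<open>x \<in> V\<close> by blast
  have xz: "outer_prod x z \<in> lie_gen G" and zx: "outer_prod z x \<in> lie_gen G"
    using lie_gen_outer_prod_symmetric_image[OF assms(2,3) xx False _ _ decomp]
      in_V[OF \<open>x \<in> V\<close> \<open>y \<in> V\<close>] in_V[OF \<open>y \<in> V\<close> \<open>x \<in> V\<close>] by blast+
  have "z \<in> V"
  proof (rule maximal_rank_one_closed_absorb[OF max])
    show "outer_prod z z \<in> lie_gen G"
      using lie_gen_outer_prod_trans[OF zx xz xx False] .
    show "outer_prod v z \<in> lie_gen G \<and> outer_prod z v \<in> lie_gen G" if "v \<in> V" for v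
    proof
      show "outer_prod v z \<in> lie_gen G"
        using lie_gen_outer_prod_trans[OF _ xz xx False] in_V[OF that \<open>x \<in> V\<close>] .
      show "outer_prod z v \<in> lie_gen G"
        using lie_gen_outer_prod_trans[OF zx _ xx False] in_V[OF \<open>x \<in> V\<close> that] .
    qed
  qed
  then have "z = 0"
    using z_orth[of z] by (simp add: orthogonal_def)
  then show ?thesis
    using decomp \<open>y \<in> V\<close> by simp
qed

lemma matpow_Suc_mult_vec: "matpow A (Suc k) *v x = A *v (matpow A k *v x)"
  by (simp add: matrix_vector_mul_assoc)

lemma matpow_mult_vec_in_invariant_subspace:
  assumes "\<And>x. x \<in> V \<Longrightarrow> A *v x \<in> V" and "x \<in> V"
  shows "matpow A k *v x \<in> V"
  by (induction k) (auto simp: assms matrix_vector_mul_assoc[symmetric])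

definition krylov :: "real^'n^'n \<Rightarrow> real^'n \<Rightarrow> nat \<Rightarrow> (real^'n) set" where
  "krylov A x m = {matpow A i *v x | i. i < m}"

lemma krylov_Suc: "krylov A x (Suc m) = insert (matpow A m *v x) (krylov A x m)"
  unfolding krylov_def by (auto simp: less_Suc_eq)

lemma ex_matpow_mult_vec_in_span_krylov:
  fixes A :: "real^'n^'n"
  shows "\<exists>m \<le> CARD('n). matpow A m *v x \<in> span (krylov A x m)"
proof (rule ccontr)
  assume "\<not> ?thesis"
  then have "dim (krylov A x m) = m" if "m \<le> Suc CARD('n)" for m
    using that by (induction m) (auto simp: krylov_Suc dim_insert, simp add: krylov_def)
  then have "dim (krylov A x (Suc CARD('n))) = Suc CARD('n)"
    by simp
  moreover have "dim (krylov A x (Suc CARD('n))) \<le> CARD('n)"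
    by (rule dim_subset_UNIV_cart)
  ultimately show False
    by simp
qed

lemma matpow_mult_vec_in_span_krylov:
  assumes "matpow A m *v x \<in> span (krylov A x m)"
  shows "matpow A k *v x \<in> span (krylov A x m)"
proof -
  have low: "matpow A i *v x \<in> span (krylov A x m)" if "i \<le> m" for i
  proof (cases "i = m")
    case False
    then have "matpow A i *v x \<in> krylov A x m"
      using that by (auto simp: krylov_def)
    then show ?thesis
      by (rule span_base)
  qed (use assms in simp)
  have "krylov A x m \<subseteq> {y. A *v y \<in> span (krylov A x m)}"
    using low by (auto simp: krylov_def matpow_Suc_mult_vec[symmetric] simp del: matpow.simps)
  then have "span (krylov A x m) \<subseteq> {y. A *v y \<in> span (krylov A x m)}"
    by (intro span_minimal real_vector.linear_subspace_linear_preimage) auto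
  then show ?thesis
    using matpow_mult_vec_in_invariant_subspace[of "span (krylov A x m)" A x k] low[of 0] by auto
qed

text \<open>In effect Cayley--Hamilton, obtained here by counting dimensions.\<close>

lemma matpow_mult_vec_in_span_krylov_CARD:
  fixes A :: "real^'n^'n"
  shows "matpow A k *v x \<in> span (krylov A x CARD('n))"
proof -
  obtain m where "m \<le> CARD('n)" "matpow A m *v x \<in> span (krylov A x m)"
    using ex_matpow_mult_vec_in_span_krylov by blast
  moreover have "span (krylov A x m) \<subseteq> span (krylov A x CARD('n))" if "m \<le> CARD('n)"
    using that by (intro span_mono) (auto simp: krylov_def)
  ultimately show ?thesis
    using matpow_mult_vec_in_span_krylov by blast
qed

text \<open>Adding \<open>c \<ge> max |A\<^sub>l\<^sub>l|\<close> to the diagonal makes \<open>A\<close> entrywise nonnegative, so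
  \<open>c v + A v\<close> is nonnegative for nonnegative \<open>v\<close> and dominates each off-diagonal term.\<close>

lemma shifted_mult_vec_lower_bound:
  fixes A :: "real^'n^'n"
  assumes off_diag: "\<And>i j. i \<noteq> j \<Longrightarrow> 0 \<le> A $ i $ j"
    and v: "\<And>l. 0 \<le> v $ l" and c: "\<And>l. \<bar>A $ l $ l\<bar> \<le> c"
  shows "0 \<le> (c *\<^sub>R v + A *v v) $ l"
    and "m \<noteq> l \<Longrightarrow> A $ l $ m * v $ m \<le> (c *\<^sub>R v + A *v v) $ l"
proof -
  define g where "g m = ((if m = l then c else 0) + A $ l $ m) * v $ m" for m
  have "(\<Sum>m\<in>UNIV. g m) = (\<Sum>m\<in>UNIV. (if m = l then c * v $ m else 0) + A $ l $ m * v $ m)"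
    by (rule sum.cong) (auto simp: g_def algebra_simps)
  then have sum_g: "(c *\<^sub>R v + A *v v) $ l = (\<Sum>m\<in>UNIV. g m)"
    by (simp add: sum.distrib matrix_vector_mult_def)
  have g_nonneg: "0 \<le> g m" for m
  proof -
    have "0 \<le> (if m = l then c else 0) + A $ l $ m"
      using off_diag[of l m] c[of l] by auto
    then show ?thesis
      unfolding g_def using v by simp
  qed
  then show "0 \<le> (c *\<^sub>R v + A *v v) $ l"
    unfolding sum_g by (simp add: sum_nonneg)
  assume "m \<noteq> l"
  then have "A $ l $ m * v $ m = g m"
    by (simp add: g_def)
  also have "\<dots> \<le> (\<Sum>m\<in>UNIV. g m)"
    by (rule member_le_sum) (auto simp: g_nonneg)
  finally show "A $ l $ m * v $ m \<le> (c *\<^sub>R v + A *v v) $ l"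
    unfolding sum_g .
qed

lemma invariant_subspace_positive_along_path:
  fixes A :: "real^'n^'n"
  assumes "transpose A = A" "subspace V" and invariant: "\<And>x. x \<in> V \<Longrightarrow> A *v x \<in> V"
    and off_diag: "\<And>i j. i \<noteq> j \<Longrightarrow> 0 \<le> A $ i $ j"
    and "axis j 1 \<in> V" and "(graph_adj A)\<^sup>*\<^sup>* j k"
  shows "\<exists>v\<in>V. (\<forall>l. 0 \<le> v $ l) \<and> 0 < v $ k"
  using assms(6)
proof (induction rule: rtranclp_induct)
  case base
  show ?case
    using assms(5) by (intro bexI[of _ "axis j 1"]) (auto simp: axis_def)
next
  case (step y z)
  then obtain v where v: "v \<in> V" "\<forall>l. 0 \<le> v $ l" "0 < v $ y"
    by blast
  define c where "c = (\<Sum>i\<in>UNIV. \<bar>A $ i $ i\<bar>)"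
  have c: "\<bar>A $ l $ l\<bar> \<le> c" for l
    unfolding c_def by (rule member_le_sum) auto
  have "y \<noteq> z" "A $ z $ y \<noteq> 0"
    using step(2) assms(1) unfolding graph_adj_def by (metis transpose_def vec_lambda_beta)+
  then have "0 < A $ z $ y * v $ y"
    using off_diag[of z y] v(3) by simp
  also have "\<dots> \<le> (c *\<^sub>R v + A *v v) $ z"
    using shifted_mult_vec_lower_bound(2)[OF off_diag _ c] v(2) \<open>y \<noteq> z\<close> by blast
  finally show ?case
    using shifted_mult_vec_lower_bound(1)[OF off_diag _ c] v assms(2) invariant
    by (intro bexI[of _ "c *\<^sub>R v + A *v v"]) (auto intro: subspace_add subspace_scale)
qed

lemma invariant_subspace_positive_along_path_sign_uniform:
  fixes A :: "real^'n^'n"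
  assumes "transpose A = A" "subspace V" and invariant: "\<And>x. x \<in> V \<Longrightarrow> A *v x \<in> V"
    and "(\<forall>i j. i \<noteq> j \<longrightarrow> A $ i $ j \<ge> 0) \<or> (\<forall>i j. i \<noteq> j \<longrightarrow> A $ i $ j \<le> 0)"
    and "axis j 1 \<in> V" and "(graph_adj A)\<^sup>*\<^sup>* j k"
  shows "\<exists>v\<in>V. (\<forall>l. 0 \<le> v $ l) \<and> 0 < v $ k"
  using assms(4)
proof
  assume "\<forall>i j. i \<noteq> j \<longrightarrow> A $ i $ j \<ge> 0"
  then show ?thesis
    using invariant_subspace_positive_along_path[OF assms(1,2) invariant _ assms(5,6)] by blast
next
  assume nonpos: "\<forall>i j. i \<noteq> j \<longrightarrow> A $ i $ j \<le> 0"
  have "transpose (- A) = - A"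
    using assms(1) by (simp add: transpose_def vec_eq_iff)
  moreover have "(- A) *v x \<in> V" if "x \<in> V" for x
  proof -
    have "(- A) *v x = - (A *v x)"
      by (simp add: vec_eq_iff matrix_vector_mult_def sum_negf)
    then show ?thesis
      using invariant[OF that] assms(2) by (simp add: subspace_neg)
  qed
  moreover have "graph_adj (- A) = graph_adj A"
    by (simp add: graph_adj_def fun_eq_iff)
  ultimately show ?thesis
    using invariant_subspace_positive_along_path[of "- A" V j k] assms(2,5,6) nonpos by auto
qed

lemma span_W_cols_invariant:
  fixes A :: "real^'n^'n"
  assumes "x \<in> span (W_cols A S)"
  shows "A *v x \<in> span (W_cols A S)"
proof -
  have "A *v y \<in> span (W_cols A S)" if "y \<in> W_cols A S" for y
  proof -
    obtain j k where "j \<in> S" and y: "y = matpow A k *v axis j 1"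
      using \<open>y \<in> W_cols A S\<close> unfolding W_cols_def by blast
    have "A *v y = matpow A (Suc k) *v axis j 1"
      unfolding y by (simp only: matpow_Suc_mult_vec)
    also have "\<dots> \<in> span (krylov A (axis j 1) CARD('n))"
      by (rule matpow_mult_vec_in_span_krylov_CARD)
    also have "\<dots> \<subseteq> span (W_cols A S)"
      using \<open>j \<in> S\<close> by (intro span_mono) (auto simp: krylov_def W_cols_def)
    finally show ?thesis .
  qed
  then have "span (W_cols A S) \<subseteq> {y. A *v y \<in> span (W_cols A S)}"
    by (intro span_minimal real_vector.linear_subspace_linear_preimage) auto
  then show ?thesis
    using assms by blast
qed

lemma axis_in_W_cols:
  fixes A :: "real^'n^'n"
  assumes "j \<in> S"
  shows "axis j 1 \<in> W_cols A S"
proof -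
  have "matpow A 0 *v axis j 1 \<in> W_cols A S"
    unfolding W_cols_def using assms zero_less_card_finite by blast
  then show ?thesis
    by simp
qed

lemma W_rank_eq_CARD_iff:
  fixes A :: "real^'n^'n"
  shows "W_rank A S = CARD('n) \<longleftrightarrow> span (W_cols A S) = UNIV"
  unfolding W_rank_def using dim_eq_full[of "W_cols A S"] by simp

lemma lie_AZ_eq_UNIV_if_span_W_cols_full:
  fixes A :: "real^'n^'n"
  assumes sym: "transpose A = A" and connected: "graph_connected A"
    and sign: "(\<forall>i j. i \<noteq> j \<longrightarrow> A $ i $ j \<ge> 0) \<or> (\<forall>i j. i \<noteq> j \<longrightarrow> A $ i $ j \<le> 0)"
    and "S \<noteq> {}" and full: "span (W_cols A S) = UNIV"
  shows "lie_AZ A S = UNIV"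
proof -
  define G where "G = insert A {outer (axis j 1) | j. j \<in> S}"
  have A_G: "A \<in> lie_gen G"
    unfolding G_def by (rule lie_gen.base) simp
  have axis_G: "outer_prod (axis j 1) (axis j 1) \<in> lie_gen G" if "j \<in> S" for j
    using that unfolding G_def by (auto simp: outer_eq_outer_prod[symmetric] intro: lie_gen.base)
  obtain j\<^sub>0 where "j\<^sub>0 \<in> S"
    using \<open>S \<noteq> {}\<close> by blast
  have "outer_prod x y \<in> lie_gen G" if "x \<in> span {axis j\<^sub>0 1}" "y \<in> span {axis j\<^sub>0 1}" for x y
    using outer_prod_span_in_lie_gen[OF _ that] axis_G[OF \<open>j\<^sub>0 \<in> S\<close>] by blast
  then have "rank_one_closed G (span {axis j\<^sub>0 1})"
    unfolding rank_one_closed_def by simp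
  then obtain V where "span {axis j\<^sub>0 1} \<subseteq> V" and max: "maximal_rank_one_closed G V"
    using ex_maximal_rank_one_closed by blast
  then have "axis j\<^sub>0 1 \<in> V" and V: "rank_one_closed G V"
    by (auto simp: maximal_rank_one_closed_def span_base)
  then have "subspace V"
    by (simp add: rank_one_closed_def)
  have invariant: "A *v x \<in> V" if "x \<in> V" for x
    using maximal_rank_one_closed_invariant[OF max A_G sym that] .
  have axis_V: "axis k 1 \<in> V" if "k \<in> S" for k
  proof -
    obtain v where "v \<in> V" "0 < v $ k"
      using invariant_subspace_positive_along_path_sign_uniform[OF sym \<open>subspace V\<close> invariant sign
          \<open>axis j\<^sub>0 1 \<in> V\<close>] connected
      unfolding graph_connected_def by blast
    then show ?thesis
      using maximal_rank_one_closed_absorb_nonorthogonal[OF max axis_G[OF that]] by (simp add: inner_axis)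
  qed
  have "matpow A k *v axis j 1 \<in> V" if "j \<in> S" for j k
    using matpow_mult_vec_in_invariant_subspace[of V A, OF invariant axis_V[OF that]] .
  then have "W_cols A S \<subseteq> V"
    unfolding W_cols_def by blast
  then have "span (W_cols A S) \<subseteq> V"
    using \<open>subspace V\<close> by (rule span_minimal)
  then have "V = UNIV"
    using full by blast
  then have "outer_prod x y \<in> lie_gen G" for x y
    using V unfolding rank_one_closed_def by blast
  then show ?thesis
    unfolding lie_AZ_def G_def[symmetric] by (rule lie_gen_eq_UNIV_if_outer_prod)
qed

lemma span_W_cols_full_if_lie_AZ_eq_UNIV:
  fixes A :: "real^'n^'n"
  assumes "S \<noteq> {}" and "lie_AZ A S = UNIV"
  shows "span (W_cols A S) = UNIV"
proof -
  let ?K = "span (W_cols A S)"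
  have generators: "Y *v v \<in> ?K"
    if Y: "Y \<in> insert A {outer (axis j 1) | j. j \<in> S}" and v: "v \<in> ?K" for Y v
  proof -
    consider "Y = A" | j where "j \<in> S" "Y = outer (axis j 1)"
      using Y by blast
    then show ?thesis
    proof cases
      case 1
      then show ?thesis
        using span_W_cols_invariant v by blast
    next
      case 2
      then have "Y *v v = (axis j 1 \<bullet> v) *\<^sub>R axis j 1"
        by (simp add: outer_eq_outer_prod matrix_vector_mult_outer_prod)
      then show ?thesis
        using axis_in_W_cols[OF \<open>j \<in> S\<close>] by (simp add: span_base span_scale)
    qed
  qed
  obtain j where "j \<in> S"
    using assms(1) by blast
  have "w \<in> ?K" for w
  proof -
    have "outer_prod w (axis j 1) \<in> lie_gen (insert A {outer (axis j 1) | j. j \<in> S})"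
      using assms(2) unfolding lie_AZ_def by simp
    then have "outer_prod w (axis j 1) *v axis j 1 \<in> ?K"
      using lie_gen_invariant_subspace[OF subspace_span generators]
        span_base[OF axis_in_W_cols[OF \<open>j \<in> S\<close>]] by blast
    then show ?thesis
      by (simp add: matrix_vector_mult_outer_prod inner_axis_axis)
  qed
  then show ?thesis
    by blast
qed

theorem theorem3p7:
  fixes A :: "real^'n^'n" and S :: "'n set"
  assumes "transpose A = A"
    and "graph_connected A"
    and "(\<forall>i j. i \<noteq> j \<longrightarrow> A $ i $ j \<ge> 0) \<or> (\<forall>i j. i \<noteq> j \<longrightarrow> A $ i $ j \<le> 0)"
    and "S \<noteq> {}"
  shows "W_rank A S = CARD('n) \<longleftrightarrow> lie_AZ A S = UNIV"
  using W_rank_eq_CARD_iff lie_AZ_eq_UNIV_if_span_W_cols_full[OF assms]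
    span_W_cols_full_if_lie_AZ_eq_UNIV[OF assms(4)] by blast

end
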